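(* For all $n\ge3$, $\mathcal{H}_{C_n}=\mathcal{H}_{C_n}^\psi=[1,\infty)$, and $\mathcal{H}_{C_4}^\phi=[2,\infty)$. Moreover, for $n>4$, $[2,\infty)\subset\mathcal{H}_{C_n}^\phi\subset[1,\infty)$, with $1\notin\mathcal{H}_{C_n}^\phi$ for $n$ even.
   Context: $C_n$ is the cycle graph on $n$ vertices. For a graph $G$ on $\{1,\dots,n\}$ and $I\subset\mathbb{R}$, $\mathcal{P}_G(I)$ is the set of real symmetric positive semidefinite $n\times n$ matrices with entries in $I$ and $a_{ij}=0$ whenever $i\ne j$ and $(i,j)$ is not an edge; $\mathcal{P}_G=\mathcal{P}_G(\mathbb{R})$. For $A$ with nonnegative entries, $A^{\circ\alpha}=(a_{ij}^\alpha)$ with $0^\alpha:=0$. $\psi_\alpha(x)=\mathrm{sgn}(x)|x|^\alpha$, $\phi_\alpha(x)=|x|^\alpha$ ($x\ne0$), $\psi_\alpha(0)=\phi_\alpha(0)=0$, applied entrywise. $\mathcal{H}_G=\{\alpha\in\mathbb{R}:A^{\circ\alpha}\in\mathcal{P}_G\ \forall A\in\mathcal{P}_G([0,\infty))\}$, $\mathcal{H}_G^\psi=\{\alpha:\psi_\alpha[A]\in\mathcal{P}_G\ \forall A\in\mathcal{P}_G(\mathbb{R})\}$, $\mathcal{H}_G^\phi=\{\alpha:\phi_\alpha[A]\in\mathcal{P}_G\ \forall A\in\mathcal{P}_G(\mathbb{R})\}$. *)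

theory Defs
  imports Complex_Main
begin

text \<open>Matrices of size n are functions nat => nat => real; only entries with
 indices < n matter. Vertices are 0..n-1 (instead of 1..n).\<close>

definition cycle_graph :: "nat \<Rightarrow> nat \<Rightarrow> nat \<Rightarrow> bool" where
  "cycle_graph n i j \<longleftrightarrow> (j = Suc i mod n \<or> i = Suc j mod n)"

definition psd_mat :: "nat \<Rightarrow> (nat \<Rightarrow> nat \<Rightarrow> real) \<Rightarrow> bool" where
  "psd_mat n A \<longleftrightarrow> (\<forall>i<n. \<forall>j<n. A i j = A j i) \<and>
     (\<forall>x :: nat \<Rightarrow> real. 0 \<le> (\<Sum>i<n. \<Sum>j<n. x i * A i j * x j))"

definition PG :: "nat \<Rightarrow> (nat \<Rightarrow> nat \<Rightarrow> bool) \<Rightarrow> real set \<Rightarrow> (nat \<Rightarrow> nat \<Rightarrow> real) set" where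
  "PG n G I = {A. psd_mat n A \<and> (\<forall>i<n. \<forall>j<n. A i j \<in> I) \<and>
                 (\<forall>i<n. \<forall>j<n. i \<noteq> j \<and> \<not> G i j \<longrightarrow> A i j = 0)}"

text \<open>Entrywise maps; note 0 powr a = 0 in Isabelle, matching 0^a := 0.\<close>
definition hpow :: "real \<Rightarrow> (nat \<Rightarrow> nat \<Rightarrow> real) \<Rightarrow> (nat \<Rightarrow> nat \<Rightarrow> real)" where
  "hpow a A = (\<lambda>i j. A i j powr a)"

definition psi_pow :: "real \<Rightarrow> real \<Rightarrow> real" where
  "psi_pow a x = sgn x * \<bar>x\<bar> powr a"

definition phi_pow :: "real \<Rightarrow> real \<Rightarrow> real" where
  "phi_pow a x = \<bar>x\<bar> powr a"

definition HG :: "nat \<Rightarrow> (nat \<Rightarrow> nat \<Rightarrow> bool) \<Rightarrow> real set" where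
  "HG n G = {a. \<forall>A \<in> PG n G {0..}. hpow a A \<in> PG n G UNIV}"

definition HG_psi :: "nat \<Rightarrow> (nat \<Rightarrow> nat \<Rightarrow> bool) \<Rightarrow> real set" where
  "HG_psi n G = {a. \<forall>A \<in> PG n G UNIV. (\<lambda>i j. psi_pow a (A i j)) \<in> PG n G UNIV}"

definition HG_phi :: "nat \<Rightarrow> (nat \<Rightarrow> nat \<Rightarrow> bool) \<Rightarrow> real set" where
  "HG_phi n G = {a. \<forall>A \<in> PG n G UNIV. (\<lambda>i j. phi_pow a (A i j)) \<in> PG n G UNIV}"

end

theory Submission
  imports Defs "HOL-Analysis.Analysis"
begin

text \<open>For \<open>\<psi>\<^sub>a\<close> with \<open>a \<ge> 1\<close> we induct on \<open>n\<close>, taking the Schur complement at the last vertex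
  of the cycle. It is again a matrix on a cycle, \<open>C\<^sub>n\<^sub>-\<^sub>1\<close>, whose only new edge joins the two
  neighbours of the removed vertex. For \<open>n \<ge> 4\<close> every off-diagonal entry of the complement is
  either an old entry or a fill-in term, never the sum of both, so \<open>\<psi>\<^sub>a\<close> commutes with taking
  the complement off the diagonal, while superadditivity of \<open>x\<^sup>a\<close> makes the complement of
  \<open>\<psi>\<^sub>a[A]\<close> dominate \<open>\<psi>\<^sub>a\<close> of the complement on the diagonal. For \<open>n = 3\<close> the two terms do
  meet, and a \<open>2 \<times> 2\<close> inequality for \<open>\<psi>\<^sub>a\<close> takes over. Since \<open>\<phi>\<^sub>a(x) = \<psi>\<^sub>a\<^sub>/\<^sub>2(x\<^sup>2)\<close>, the case
  \<open>a \<ge> 2\<close> of \<open>\<phi>\<^sub>a\<close> follows by the Schur product theorem.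

  The lower bounds come from the path matrix \<open>[1 1 0; 1 2 1; 0 1 1]\<close> for \<open>a < 1\<close>, and from a
  family of cycle matrices with one signed edge which the same Schur complement step reduces
  to a \<open>4 \<times> 4\<close> matrix.\<close>

section \<open>Quadratic forms and Schur complements\<close>

definition quad_form :: "nat \<Rightarrow> (nat \<Rightarrow> nat \<Rightarrow> real) \<Rightarrow> (nat \<Rightarrow> real) \<Rightarrow> real" where
  "quad_form n A x = (\<Sum>i<n. \<Sum>j<n. x i * A i j * x j)"

definition symmetric_mat :: "nat \<Rightarrow> (nat \<Rightarrow> nat \<Rightarrow> real) \<Rightarrow> bool" where
  "symmetric_mat n A \<longleftrightarrow> (\<forall>i<n. \<forall>j<n. A i j = A j i)"

text \<open>If \<open>A m m = 0\<close>
  the correction vanishes because \<open>x / 0 = 0\<close>; for PSD matrices the last row is then zero anyway.\<close>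
definition schur_compl :: "nat \<Rightarrow> (nat \<Rightarrow> nat \<Rightarrow> real) \<Rightarrow> nat \<Rightarrow> nat \<Rightarrow> real" where
  "schur_compl m A = (\<lambda>i j. A i j - A i m * A m j / A m m)"

lemma psd_mat_iff: "psd_mat n A \<longleftrightarrow> symmetric_mat n A \<and> (\<forall>x. 0 \<le> quad_form n A x)"
  unfolding psd_mat_def symmetric_mat_def quad_form_def by blast

lemma psd_mat_symmetric: "psd_mat n A \<Longrightarrow> symmetric_mat n A"
  by (simp add: psd_mat_iff)

lemma psd_mat_quad_form_nonneg: "psd_mat n A \<Longrightarrow> 0 \<le> quad_form n A x"
  by (simp add: psd_mat_iff)

lemma quad_form_cong:
  "(\<And>i j. i < n \<Longrightarrow> j < n \<Longrightarrow> A i j = B i j) \<Longrightarrow> quad_form n A x = quad_form n B x"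
  unfolding quad_form_def by (auto intro!: sum.cong)

lemma quad_form_cong_vec: "(\<And>i. i < n \<Longrightarrow> x i = y i) \<Longrightarrow> quad_form n A x = quad_form n A y"
  unfolding quad_form_def by (auto intro!: sum.cong)

lemma psd_mat_cong:
  "psd_mat n A \<Longrightarrow> (\<And>i j. i < n \<Longrightarrow> j < n \<Longrightarrow> A i j = B i j) \<Longrightarrow> psd_mat n B"
  unfolding psd_mat_iff symmetric_mat_def using quad_form_cong by metis

lemma quad_form_restrict:
  assumes "m \<le> n" "\<And>k. m \<le> k \<Longrightarrow> x k = 0"
  shows "quad_form n A x = quad_form m A x"
proof -
  have "quad_form n A x = (\<Sum>i<m. \<Sum>j<n. x i * A i j * x j)"
    unfolding quad_form_def by (rule sum.mono_neutral_right) (use assms in auto)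
  also have "\<dots> = quad_form m A x"
    unfolding quad_form_def by (intro sum.cong refl sum.mono_neutral_right) (use assms in auto)
  finally show ?thesis .
qed

lemma quad_form_Suc:
  assumes "symmetric_mat (Suc m) A"
  shows "quad_form (Suc m) A x = quad_form m A x + 2 * x m * (\<Sum>i<m. A i m * x i) + A m m * (x m)\<^sup>2"
proof -
  have row: "(\<Sum>j<m. x m * A m j * x j) = x m * (\<Sum>i<m. A i m * x i)"
    using assms unfolding symmetric_mat_def by (auto simp: sum_distrib_left intro!: sum.cong)
  have col: "(\<Sum>i<m. x i * A i m * x m) = x m * (\<Sum>i<m. A i m * x i)"
    by (auto simp: sum_distrib_left intro!: sum.cong)
  show ?thesis unfolding quad_form_def
    by (simp only: sum.lessThan_Suc sum.distrib row col) (simp add: power2_eq_square algebra_simps)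
qed

lemma quad_form_schur_compl:
  assumes "symmetric_mat (Suc m) A"
  shows "quad_form m (schur_compl m A) x = quad_form m A x - (\<Sum>i<m. A i m * x i)\<^sup>2 / A m m"
proof -
  have "quad_form m (schur_compl m A) x
      = quad_form m A x - (\<Sum>i<m. \<Sum>j<m. (A i m * x i) * (A j m * x j) / A m m)"
    using assms unfolding quad_form_def schur_compl_def symmetric_mat_def
    by (auto simp: sum_subtractf[symmetric] algebra_simps intro!: sum.cong)
  also have "(\<Sum>i<m. \<Sum>j<m. (A i m * x i) * (A j m * x j) / A m m) = (\<Sum>i<m. A i m * x i)\<^sup>2 / A m m"
    by (simp add: power2_eq_square sum_product sum_divide_distrib)
  finally show ?thesis .
qed

lemma symmetric_schur_compl: "symmetric_mat (Suc m) A \<Longrightarrow> symmetric_mat m (schur_compl m A)"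
  unfolding symmetric_mat_def schur_compl_def by auto

lemma quad_form_two_coords:
  assumes "i < n" "j < n" "i \<noteq> j"
  shows "quad_form n A (\<lambda>k. (if k = i then u else 0) + (if k = j then v else 0))
     = u * u * A i i + u * v * A i j + v * u * A j i + v * v * A j j"
proof -
  let ?x = "\<lambda>k. (if k = i then u else 0) + (if k = j then v else 0)"
  have pick: "(\<Sum>k<n. g k * ?x k) = g i * u + g j * v" for g :: "nat \<Rightarrow> real"
  proof -
    have "g k * ?x k = (if k = i then g i * u else 0) + (if k = j then g j * v else 0)" for k
      using assms by auto
    then show ?thesis using assms by (simp add: sum.distrib)
  qed
  have "quad_form n A ?x = (\<Sum>k<n. (\<Sum>l<n. A k l * ?x l) * ?x k)"
    unfolding quad_form_def by (simp add: sum_distrib_left sum_distrib_right mult_ac)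
  also have "\<dots> = (\<Sum>k<n. (A k i * u + A k j * v) * ?x k)"
    by (simp only: pick)
  also have "\<dots> = (A i i * u + A i j * v) * u + (A j i * u + A j j * v) * v"
    by (rule pick)
  finally show ?thesis by (simp add: algebra_simps)
qed

lemma psd_mat_diag_nonneg:
  assumes "psd_mat n A" "i < n"
  shows "0 \<le> A i i"
proof -
  have "quad_form n A (\<lambda>k. if k = i then 1 else 0) = A i i"
    using assms(2) unfolding quad_form_def
    by (simp add: if_distrib[where f="\<lambda>t. t * _"] if_distrib[where f="\<lambda>t. _ * t"] cong: if_cong)
  then show ?thesis using psd_mat_quad_form_nonneg[OF assms(1)] by metis
qed

lemma discriminant_le_of_nonneg_quadratic:
  fixes a b c :: real
  assumes "\<And>u v. 0 \<le> u * u * a + 2 * u * v * b + v * v * c"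
  shows "b\<^sup>2 \<le> a * c"
proof (cases "a = 0")
  case True
  have "b = 0"
  proof (rule ccontr)
    assume "b \<noteq> 0"
    have "0 \<le> (-(c+1)/(2*b)) * (-(c+1)/(2*b)) * a + 2 * (-(c+1)/(2*b)) * 1 * b + 1 * 1 * c"
      by (rule assms)
    also have "\<dots> = -1" using True \<open>b \<noteq> 0\<close> by (simp add: field_simps)
    finally show False by simp
  qed
  then show ?thesis using True by simp
next
  case False
  then have "0 < a" using assms[of 1 0] by simp
  have "0 \<le> (-b) * (-b) * a + 2 * (-b) * a * b + a * a * c" by (rule assms)
  then have "0 \<le> a * (a * c - b\<^sup>2)" by (simp add: algebra_simps power2_eq_square)
  then show ?thesis using \<open>0 < a\<close> by (simp add: zero_le_mult_iff)
qed

lemma psd_mat_offdiag_sq_le: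
  assumes "psd_mat n A" "i < n" "j < n" "i \<noteq> j"
  shows "(A i j)\<^sup>2 \<le> A i i * A j j"
proof (rule discriminant_le_of_nonneg_quadratic)
  fix u v
  have "A j i = A i j" using assms unfolding psd_mat_def by auto
  then have "quad_form n A (\<lambda>k. (if k = i then u else 0) + (if k = j then v else 0))
      = u * u * A i i + 2 * u * v * A i j + v * v * A j j"
    by (simp add: quad_form_two_coords[OF assms(2-4)] algebra_simps)
  then show "0 \<le> u * u * A i i + 2 * u * v * A i j + v * v * A j j"
    by (metis psd_mat_quad_form_nonneg[OF assms(1)])
qed

lemma psd_mat_row_zero:
  assumes "psd_mat n A" "i < n" "j < n" "A i i = 0"
  shows "A i j = 0" "A j i = 0"
proof -
  show "A i j = 0"
    using psd_mat_offdiag_sq_le[OF assms(1-3)] assms(4) by (cases "i = j") auto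
  then show "A j i = 0"
    using assms psd_mat_symmetric unfolding symmetric_mat_def by metis
qed

lemma psd_mat_schur_compl:
  assumes "psd_mat (Suc m) A"
  shows "psd_mat m (schur_compl m A)"
proof -
  have sym: "symmetric_mat (Suc m) A" using assms by (rule psd_mat_symmetric)
  have "0 \<le> quad_form m (schur_compl m A) x" for x
  proof -
    let ?s = "\<Sum>i<m. A i m * x i"
    define y where "y = x(m := - ?s / A m m)"
    have "0 \<le> quad_form (Suc m) A y" using assms by (rule psd_mat_quad_form_nonneg)
    also have "quad_form (Suc m) A y = quad_form m A x + 2 * y m * ?s + A m m * (y m)\<^sup>2"
      using quad_form_Suc[OF sym, of y] quad_form_cong_vec[of m y x A] by (simp add: y_def)
    also have "\<dots> = quad_form m (schur_compl m A) x"
    proof (cases "A m m = 0")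
      case True
      then have "A i m = 0" if "i < m" for i
        using psd_mat_row_zero(2)[OF assms, of m i] that by simp
      then show ?thesis using True by (simp add: quad_form_schur_compl[OF sym] y_def)
    next
      case False
      then show ?thesis
        by (simp add: quad_form_schur_compl[OF sym] y_def field_simps power2_eq_square)
    qed
    finally show ?thesis .
  qed
  then show ?thesis using symmetric_schur_compl[OF sym] unfolding psd_mat_iff by simp
qed

lemma psd_mat_of_schur_compl:
  assumes sym: "symmetric_mat (Suc m) A" and psd: "psd_mat m (schur_compl m A)"
    and last: "0 < A m m \<or> (\<forall>i<Suc m. A i m = 0)"
  shows "psd_mat (Suc m) A"
proof -
  have "0 \<le> quad_form (Suc m) A x" for x
  proof -
    let ?s = "\<Sum>i<m. A i m * x i"
    have q: "0 \<le> quad_form m (schur_compl m A) x" using psd by (rule psd_mat_quad_form_nonneg)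
    show ?thesis
    proof (cases "A m m = 0")
      case True
      then have "?s = 0" using last by simp
      then show ?thesis using q True by (simp add: quad_form_Suc[OF sym] quad_form_schur_compl[OF sym])
    next
      case False
      then have pos: "0 < A m m" using last by auto
      have "quad_form (Suc m) A x = quad_form m (schur_compl m A) x + A m m * (x m + ?s / A m m)\<^sup>2"
        using pos
        by (simp add: quad_form_Suc[OF sym] quad_form_schur_compl[OF sym] field_simps power2_eq_square)
      then show ?thesis using q pos by simp
    qed
  qed
  then show ?thesis using sym unfolding psd_mat_iff by simp
qed

lemma psd_mat_Suc_iff_schur_compl:
  assumes "symmetric_mat (Suc m) A" "0 < A m m"
  shows "psd_mat (Suc m) A \<longleftrightarrow> psd_mat m (schur_compl m A)"
  using psd_mat_schur_compl psd_mat_of_schur_compl assms by blast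

lemma psd_mat_increase_diag:
  assumes psd: "psd_mat n A" and sym: "symmetric_mat n B"
    and off: "\<And>i j. i < n \<Longrightarrow> j < n \<Longrightarrow> i \<noteq> j \<Longrightarrow> B i j = A i j"
    and diag: "\<And>i. i < n \<Longrightarrow> A i i \<le> B i i"
  shows "psd_mat n B"
proof -
  have "0 \<le> quad_form n B x" for x
  proof -
    let ?D = "\<lambda>i j. if i = j then B i i - A i i else 0"
    have "quad_form n B x = quad_form n A x + quad_form n ?D x"
      unfolding quad_form_def sum.distrib[symmetric] using off
      by (intro sum.cong refl) (auto simp: algebra_simps)
    also have "quad_form n ?D x = (\<Sum>i<n. (B i i - A i i) * (x i)\<^sup>2)"
      unfolding quad_form_def
      by (simp add: if_distrib[where f="\<lambda>t. t * _"] if_distrib[where f="\<lambda>t. _ * t"]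
          power2_eq_square mult_ac cong: if_cong)
    finally show ?thesis
      using psd_mat_quad_form_nonneg[OF psd, of x] diag
      by (smt (verit) lessThan_iff mult_nonneg_nonneg sum_nonneg zero_le_power2)
  qed
  then show ?thesis using sym unfolding psd_mat_iff by simp
qed

lemma psd_mat_2x2:
  assumes "symmetric_mat 2 M" "0 \<le> M 0 0" "0 \<le> M 1 1" "(M 0 1)\<^sup>2 \<le> M 0 0 * M 1 1"
  shows "psd_mat 2 M"
proof -
  have "0 \<le> quad_form 2 M x" for x
  proof -
    have "M 1 0 = M 0 1" using assms(1) unfolding symmetric_mat_def by auto
    then have form: "quad_form 2 M x = x 0 * x 0 * M 0 0 + 2 * x 0 * x 1 * M 0 1 + x 1 * x 1 * M 1 1"
      unfolding quad_form_def by (simp add: numeral_2_eq_2 algebra_simps)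
    show ?thesis
    proof (cases "M 0 0 = 0")
      case True
      then have "M 0 1 = 0" using assms(4) by simp
      then show ?thesis using form True assms(3) by simp
    next
      case False
      then have pos: "0 < M 0 0" using assms(2) by simp
      have "M 0 0 * quad_form 2 M x
          = (M 0 0 * x 0 + M 0 1 * x 1)\<^sup>2 + (M 0 0 * M 1 1 - (M 0 1)\<^sup>2) * (x 1)\<^sup>2"
        unfolding form by (simp add: algebra_simps power2_eq_square)
      also have "\<dots> \<ge> 0" using assms(4) by simp
      finally show ?thesis using pos by (simp add: zero_le_mult_iff)
    qed
  qed
  then show ?thesis using assms(1) unfolding psd_mat_iff by simp
qed

section \<open>Inequalities for real powers\<close>

lemma powr_superadditive:
  fixes x y p :: real
  assumes "0 \<le> x" "0 \<le> y" "1 \<le> p"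
  shows "x powr p + y powr p \<le> (x + y) powr p"
proof (cases "x + y = 0")
  case True
  then have "x = 0" "y = 0" using assms by auto
  then show ?thesis by simp
next
  case False
  then have s: "0 < x + y" using assms by simp
  have frac: "(t / (x + y)) powr p \<le> t / (x + y)" if "0 \<le> t" "t \<le> x + y" for t
    using powr_mono'[OF assms(3), of "t / (x + y)"] that s by simp
  have "x powr p + y powr p = (x + y) powr p * ((x / (x + y)) powr p + (y / (x + y)) powr p)"
    using s by (simp add: powr_divide distrib_left)
  also have "\<dots> \<le> (x + y) powr p * (x / (x + y) + y / (x + y))"
    using frac assms by (intro mult_left_mono add_mono) auto
  also have "\<dots> = (x + y) powr p"
    using s by (simp add: add_divide_distrib[symmetric])
  finally show ?thesis .
qed

lemma powr_diff_le_diff_powr: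
  fixes x y p :: real
  assumes "0 \<le> y" "y \<le> x" "1 \<le> p"
  shows "(x - y) powr p \<le> x powr p - y powr p"
  using powr_superadditive[of "x - y" y p] assms by simp

lemma powr_above_tangent:
  fixes x y p :: real
  assumes "0 \<le> x" "0 \<le> y" "1 \<le> p"
  shows "y powr p + p * y powr (p - 1) * (x - y) \<le> x powr p"
proof (cases "y = 0")
  case False
  then have y: "0 < y" using assms by simp
  show ?thesis
  proof (cases "x = 0")
    case True
    have "y powr (p - 1) * y = y powr p"
      using y by (simp add: powr_diff)
    then have "y powr p + p * y powr (p - 1) * (x - y) = (1 - p) * y powr p"
      using True by (simp add: algebra_simps)
    also have "\<dots> \<le> 0" using assms by (simp add: mult_nonpos_nonneg)
    finally show ?thesis using True by simp
  next
    case False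
    then have x: "0 < x" using assms by simp
    have "p * y powr (p - 1) * (x - y) \<le> x powr p - y powr p"
    proof (rule convex_on_imp_above_tangent[OF powr_convex[OF assms(3)]])
      show "connected {0::real<..}" by simp
      show "y \<in> interior {0::real<..}" using y by (simp add: interior_open)
      show "x \<in> {0<..}" using x by simp
      show "((\<lambda>x. x powr p) has_field_derivative p * y powr (p - 1)) (at y within {0<..})"
        using has_real_derivative_powr[OF y] by (rule has_field_derivative_at_within)
    qed
    then show ?thesis by simp
  qed
qed (use assms in simp)

lemma continuous_on_powr_affine_increment:
  fixes u v p :: real
  assumes "0 \<le> u" "0 \<le> v" "0 < p"
  shows "continuous_on {0..1} (\<lambda>t. (u + t * v) powr p - u powr p)"
proof (intro continuous_on_diff continuous_on_const continuous_on_powr')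
  show "continuous_on {0..1} (\<lambda>t. u + t * v)" by (intro continuous_intros)
  show "\<forall>t\<in>{0..1}. 0 \<le> u + t * v \<and> (u + t * v = 0 \<longrightarrow> 0 < p)"
    using assms by auto
qed

lemma DERIV_powr_affine_increment:
  fixes u v p t :: real
  assumes "0 < u + t * v"
  shows "((\<lambda>t. (u + t * v) powr p - u powr p) has_real_derivative p * (u + t * v) powr (p - 1) * v) (at t)"
proof -
  have "((\<lambda>t. u + t * v) has_real_derivative v) (at t)" by (auto intro!: derivative_eq_intros)
  from DERIV_fun_powr[OF this, of p] assms
  have "((\<lambda>t. (u + t * v) powr p) has_real_derivative p * (u + t * v) powr (p - 1) * v) (at t)"
    by simp
  then show ?thesis using DERIV_diff[OF _ DERIV_const] by fastforce
qed

lemma sqrt_mult_le_weighted_mean: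
  fixes h1 h2 d1 d2 :: real
  assumes "0 < h1" "0 < h2" "0 \<le> d1" "0 \<le> d2"
  shows "sqrt (d1 * d2) \<le> (d1 * h2 + h1 * d2) / (2 * sqrt (h1 * h2))"
proof -
  have "2 * sqrt (h1 * h2) * sqrt (d1 * d2) = 2 * (sqrt (d1 * h2) * sqrt (h1 * d2))"
    by (simp add: real_sqrt_mult[symmetric] algebra_simps)
  also have "\<dots> \<le> d1 * h2 + h1 * d2"
    using assms sum_squares_bound[of "sqrt (d1 * h2)" "sqrt (h1 * d2)"] by simp
  finally show ?thesis using assms by (simp add: field_simps)
qed

text \<open>If \<open>g' \<le> \<surd>(h\<^sub>1' h\<^sub>2')\<close>, the AM-GM bound of \<open>\<surd>(h\<^sub>1' h\<^sub>2')\<close> by the derivative of \<open>\<surd>(h\<^sub>1 h\<^sub>2)\<close>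
  makes \<open>\<surd>(h\<^sub>1 h\<^sub>2) - g\<close> increasing.\<close>
lemma sqrt_mult_minus_increasing:
  fixes h1 h2 g :: "real \<Rightarrow> real"
  assumes cont: "continuous_on {0..1} h1" "continuous_on {0..1} h2" "continuous_on {0..1} g"
    and deriv: "\<And>t. 0 < t \<Longrightarrow> t < 1 \<Longrightarrow>
      (h1 has_real_derivative d1 t) (at t) \<and> (h2 has_real_derivative d2 t) (at t) \<and>
      (g has_real_derivative dg t) (at t)"
    and pos: "\<And>t. 0 < t \<Longrightarrow> t < 1 \<Longrightarrow> 0 < h1 t \<and> 0 < h2 t \<and> 0 \<le> d1 t \<and> 0 \<le> d2 t"
    and slope: "\<And>t. 0 < t \<Longrightarrow> t < 1 \<Longrightarrow> dg t \<le> sqrt (d1 t * d2 t)"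
  shows "sqrt (h1 0 * h2 0) - g 0 \<le> sqrt (h1 1 * h2 1) - g 1"
proof (rule DERIV_nonneg_imp_increasing_open[of 0 1])
  show "continuous_on {0..1} (\<lambda>t. sqrt (h1 t * h2 t) - g t)"
    using cont by (intro continuous_intros) auto
next
  fix t :: real assume t: "0 < t" "t < 1"
  have H: "0 < h1 t * h2 t" using pos[OF t] by simp
  have "((\<lambda>t. h1 t * h2 t) has_real_derivative d1 t * h2 t + d2 t * h1 t) (at t)"
    using deriv[OF t] by (auto intro: DERIV_mult)
  from DERIV_chain2[OF DERIV_real_sqrt[OF H] this]
  have D: "((\<lambda>t. sqrt (h1 t * h2 t) - g t) has_real_derivative
      inverse (sqrt (h1 t * h2 t)) * (d1 t * h2 t + d2 t * h1 t) / 2 - dg t) (at t)"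
    using deriv[OF t] by (intro DERIV_diff) auto
  have "dg t \<le> (d1 t * h2 t + h1 t * d2 t) / (2 * sqrt (h1 t * h2 t))"
    using slope[OF t] sqrt_mult_le_weighted_mean pos[OF t] by fastforce
  then show "\<exists>y. ((\<lambda>t. sqrt (h1 t * h2 t) - g t) has_real_derivative y) (at t) \<and> 0 \<le> y"
    using D by (intro exI[of _ "_ - dg t"]) (auto simp: field_simps)
qed simp

lemma powr_increment_le_sqrt:
  fixes a b c e p :: real
  assumes a: "0 \<le> a" and b: "0 < b" and c: "0 \<le> c" and e: "0 < e" and p: "1 \<le> p"
  shows "(a*c + b*e) powr p - (a*c) powr p \<le>
    sqrt (((a\<^sup>2 + b\<^sup>2) powr p - (a\<^sup>2) powr p) * ((c\<^sup>2 + e\<^sup>2) powr p - (c\<^sup>2) powr p))"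
proof -
  let ?h = "\<lambda>u v t. (u + t * v) powr p - u powr p"
  have "sqrt (?h (a\<^sup>2) (b\<^sup>2) 0 * ?h (c\<^sup>2) (e\<^sup>2) 0) - ?h (a*c) (b*e) 0
      \<le> sqrt (?h (a\<^sup>2) (b\<^sup>2) 1 * ?h (c\<^sup>2) (e\<^sup>2) 1) - ?h (a*c) (b*e) 1"
  proof (rule sqrt_mult_minus_increasing)
    show "continuous_on {0..1} (?h (a\<^sup>2) (b\<^sup>2))" "continuous_on {0..1} (?h (c\<^sup>2) (e\<^sup>2))"
      "continuous_on {0..1} (?h (a*c) (b*e))"
      using assms by (auto intro!: continuous_on_powr_affine_increment)
  next
    fix t :: real assume t: "0 < t" "t < 1"
    have A: "0 < a\<^sup>2 + t * b\<^sup>2" and C: "0 < c\<^sup>2 + t * e\<^sup>2" and M: "0 < a*c + t*(b*e)"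
      using t assms by (simp_all add: add_nonneg_pos)
    let ?d = "\<lambda>u v. p * (u + t * v) powr (p - 1) * v"
    show "(?h (a\<^sup>2) (b\<^sup>2) has_real_derivative ?d (a\<^sup>2) (b\<^sup>2)) (at t) \<and>
        (?h (c\<^sup>2) (e\<^sup>2) has_real_derivative ?d (c\<^sup>2) (e\<^sup>2)) (at t) \<and>
        (?h (a*c) (b*e) has_real_derivative ?d (a*c) (b*e)) (at t)"
      using A C M by (intro conjI DERIV_powr_affine_increment) auto
    show "0 < ?h (a\<^sup>2) (b\<^sup>2) t \<and> 0 < ?h (c\<^sup>2) (e\<^sup>2) t \<and> 0 \<le> ?d (a\<^sup>2) (b\<^sup>2) \<and> 0 \<le> ?d (c\<^sup>2) (e\<^sup>2)"
      using t assms by (auto intro!: powr_less_mono2)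
    have MAC: "(a*c + t*(b*e))\<^sup>2 \<le> (a\<^sup>2 + t * b\<^sup>2) * (c\<^sup>2 + t * e\<^sup>2)"
    proof -
      have "(a\<^sup>2 + t * b\<^sup>2) * (c\<^sup>2 + t * e\<^sup>2) - (a*c + t*(b*e))\<^sup>2 = t * (a*e - b*c)\<^sup>2"
        by (simp add: power2_eq_square algebra_simps)
      then show ?thesis using t by (smt (verit) mult_nonneg_nonneg zero_le_power2)
    qed
    have "((a*c + t*(b*e)) powr (p - 1))\<^sup>2 = ((a*c + t*(b*e))\<^sup>2) powr (p - 1)"
      by (simp add: power2_eq_square powr_mult)
    also have "\<dots> \<le> ((a\<^sup>2 + t * b\<^sup>2) * (c\<^sup>2 + t * e\<^sup>2)) powr (p - 1)"
      using MAC p by (intro powr_mono2) auto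
    also have "\<dots> = (a\<^sup>2 + t * b\<^sup>2) powr (p - 1) * (c\<^sup>2 + t * e\<^sup>2) powr (p - 1)"
      using A C by (simp add: powr_mult)
    finally have "(p * (b * e))\<^sup>2 * ((a*c + t*(b*e)) powr (p - 1))\<^sup>2
        \<le> (p * (b * e))\<^sup>2 * ((a\<^sup>2 + t * b\<^sup>2) powr (p - 1) * (c\<^sup>2 + t * e\<^sup>2) powr (p - 1))"
      by (rule mult_left_mono) simp
    then have "(?d (a*c) (b*e))\<^sup>2 \<le> ?d (a\<^sup>2) (b\<^sup>2) * ?d (c\<^sup>2) (e\<^sup>2)"
      by (simp add: power2_eq_square mult_ac)
    then show "?d (a*c) (b*e) \<le> sqrt (?d (a\<^sup>2) (b\<^sup>2) * ?d (c\<^sup>2) (e\<^sup>2))"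
      by (rule real_le_rsqrt)
  qed
  then show ?thesis by simp
qed

lemma sqrt_powr: "0 \<le> x \<Longrightarrow> sqrt x powr a = sqrt (x powr a)"
  by (simp add: powr_half_sqrt[symmetric] powr_powr mult.commute)

lemma powr_rank_one_gap_below:
  fixes p P q Q r R a :: real
  assumes P: "0 \<le> P" "P \<le> p" and Q: "0 \<le> Q" "Q \<le> q" and RR: "R\<^sup>2 = P * Q"
    and r: "0 \<le> r" "r \<le> R" "R - r \<le> sqrt ((p - P) * (q - Q))" and a: "1 \<le> a"
  shows "R powr a - r powr a \<le> sqrt ((p powr a - P powr a) * (q powr a - Q powr a))"
proof -
  have R: "0 \<le> R" using r by simp
  have "R powr a - r powr a \<le> a * R powr (a - 1) * (R - r)"
    using powr_above_tangent[OF r(1) R a] by (simp add: algebra_simps)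
  also have "\<dots> \<le> a * R powr (a - 1) * sqrt ((p - P) * (q - Q))"
    using r a by (intro mult_left_mono) auto
  also have "\<dots> \<le> sqrt ((p powr a - P powr a) * (q powr a - Q powr a))"
  proof (rule real_le_rsqrt)
    have "(R powr (a - 1))\<^sup>2 = P powr (a - 1) * Q powr (a - 1)"
      using RR P Q by (simp add: power2_eq_square powr_mult[symmetric])
    then have "(a * R powr (a - 1) * sqrt ((p - P) * (q - Q)))\<^sup>2
        = (a * P powr (a - 1) * (p - P)) * (a * Q powr (a - 1) * (q - Q))"
      using P Q by (simp add: power_mult_distrib power2_eq_square mult_ac)
    also have "\<dots> \<le> (p powr a - P powr a) * (q powr a - Q powr a)"
      using powr_above_tangent[of p P a] powr_above_tangent[of q Q a] P Q a
      by (intro mult_mono) (auto intro: powr_mono2)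
    finally show "(a * R powr (a - 1) * sqrt ((p - P) * (q - Q)))\<^sup>2
        \<le> (p powr a - P powr a) * (q powr a - Q powr a)" .
  qed
  finally show ?thesis .
qed

text \<open>Writing \<open>R = \<surd>P \<surd>Q\<close> and \<open>r - R \<le> \<surd>(p - P) \<surd>(q - Q)\<close>, this is
  \<open>powr_increment_le_sqrt\<close> for the vectors \<open>(\<surd>P, \<surd>(p - P))\<close> and \<open>(\<surd>Q, \<surd>(q - Q))\<close>.\<close>
lemma powr_rank_one_gap_above:
  fixes p P q Q r R a :: real
  assumes P: "0 \<le> P" "P \<le> p" and Q: "0 \<le> Q" "Q \<le> q" and RR: "R\<^sup>2 = P * Q"
    and r: "0 \<le> R" "R \<le> r" "r - R \<le> sqrt ((p - P) * (q - Q))" and a: "1 \<le> a"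
  shows "r powr a - R powr a \<le> sqrt ((p powr a - P powr a) * (q powr a - Q powr a))"
proof -
  have R: "R = sqrt P * sqrt Q"
    using RR r(1) by (metis real_sqrt_abs real_sqrt_mult abs_of_nonneg)
  have gap: "0 \<le> (p powr a - P powr a) * (q powr a - Q powr a)"
    using P Q a by (intro mult_nonneg_nonneg) (auto intro!: powr_mono2)
  have "r powr a - R powr a \<le> (R + sqrt (p - P) * sqrt (q - Q)) powr a - R powr a"
    using r a by (simp add: powr_mono2 real_sqrt_mult)
  also have "\<dots> \<le> sqrt ((p powr a - P powr a) * (q powr a - Q powr a))"
  proof (cases "P = p \<or> Q = q")
    case True
    then show ?thesis using gap by auto
  next
    case False
    then show ?thesis
      using powr_increment_le_sqrt[of "sqrt P" "sqrt (p - P)" "sqrt Q" "sqrt (q - Q)" a] P Q a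
      unfolding R by simp
  qed
  finally show ?thesis .
qed

lemma abs_powr_diff_rank_one_gap:
  fixes p P q Q r R a :: real
  assumes P: "0 \<le> P" "P \<le> p" and Q: "0 \<le> Q" "Q \<le> q" and RR: "R\<^sup>2 = P * Q"
    and rR: "(r - R)\<^sup>2 \<le> (p - P) * (q - Q)" and a: "1 \<le> a" and nonneg: "0 \<le> r" "0 \<le> R"
  shows "\<bar>r powr a - R powr a\<bar> \<le> sqrt ((p powr a - P powr a) * (q powr a - Q powr a))"
proof -
  have "\<bar>r - R\<bar> \<le> sqrt ((p - P) * (q - Q))" using rR by (intro real_le_rsqrt) simp
  then show ?thesis
    using powr_rank_one_gap_below[OF P Q RR _ _ _ a, of r] powr_rank_one_gap_above[OF P Q RR _ _ _ a, of r]
      nonneg a powr_mono2[of a r R] powr_mono2[of a R r]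
    by (cases "r \<le> R") auto
qed

lemma psi_pow_nonneg: "0 \<le> x \<Longrightarrow> psi_pow a x = x powr a"
  by (cases "x = 0") (auto simp: psi_pow_def)

lemma psi_pow_minus: "psi_pow a (- x) = - psi_pow a x"
  by (simp add: psi_pow_def sgn_minus)

lemma psi_pow_zero [simp]: "psi_pow a 0 = 0"
  by (simp add: psi_pow_def)

lemma psi_pow_mult: "psi_pow a (x * y) = psi_pow a x * psi_pow a y"
  by (simp add: psi_pow_def sgn_mult abs_mult powr_mult)

lemma psi_pow_divide: "0 \<le> d \<Longrightarrow> psi_pow a (x / d) = psi_pow a x / d powr a"
  by (cases "d = 0") (auto simp: psi_pow_def powr_divide)

text \<open>The matrix \<open>[p r; r q]\<close> dominates the rank-one matrix \<open>[P R; R Q]\<close> in the PSD order; this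
  survives applying \<open>\<psi>\<^sub>a\<close> to all four entries of both matrices.\<close>
lemma psi_pow_rank_one_gap:
  fixes p P q Q r R a :: real
  assumes P: "0 \<le> P" "P \<le> p" and Q: "0 \<le> Q" "Q \<le> q" and RR: "R\<^sup>2 = P * Q"
    and rR: "(r - R)\<^sup>2 \<le> (p - P) * (q - Q)" and a: "1 \<le> a"
  shows "(psi_pow a r - psi_pow a R)\<^sup>2 \<le> (p powr a - P powr a) * (q powr a - Q powr a)"
proof -
  define K where "K = sqrt ((p powr a - P powr a) * (q powr a - Q powr a))"
  have gap: "0 \<le> (p powr a - P powr a) * (q powr a - Q powr a)"
    using P Q a by (intro mult_nonneg_nonneg) (auto intro!: powr_mono2)
  have "\<bar>psi_pow a r - psi_pow a R\<bar> \<le> K"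
  proof (cases "0 \<le> r * R")
    case True
    then consider "0 \<le> r" "0 \<le> R" | "r \<le> 0" "R \<le> 0"
      by (auto simp: zero_le_mult_iff)
    then show ?thesis
    proof cases
      case 1
      then show ?thesis
        using abs_powr_diff_rank_one_gap[OF P Q RR rR a] by (simp add: psi_pow_nonneg K_def)
    next
      case 2
      then have "\<bar>(-r) powr a - (-R) powr a\<bar> \<le> K"
        using abs_powr_diff_rank_one_gap[of P p Q q "-R" "-r" a] P Q RR rR a
        by (simp add: K_def power2_commute algebra_simps)
      then show ?thesis
        using 2 psi_pow_minus[of a "-r"] psi_pow_minus[of a "-R"]
          psi_pow_nonneg[of "-r" a] psi_pow_nonneg[of "-R" a]
        by (simp add: abs_minus_commute)
    qed
  next
    case False
    have "\<bar>psi_pow a r - psi_pow a R\<bar> = \<bar>r\<bar> powr a + \<bar>R\<bar> powr a"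
      using False by (auto simp: psi_pow_def sgn_if zero_le_mult_iff) (smt (verit) powr_ge_zero)+
    also have "\<dots> \<le> (\<bar>r\<bar> + \<bar>R\<bar>) powr a" by (rule powr_superadditive) (use a in auto)
    also have "\<bar>r\<bar> + \<bar>R\<bar> = \<bar>r - R\<bar>" using False by (auto simp: zero_le_mult_iff)
    also have "\<bar>r - R\<bar> powr a \<le> sqrt ((p - P) * (q - Q)) powr a"
      using rR a by (intro powr_mono2 real_le_rsqrt) auto
    also have "\<dots> = sqrt ((p - P) powr a * (q - Q) powr a)"
      using P Q by (simp add: sqrt_powr powr_mult)
    also have "\<dots> \<le> K" unfolding K_def
      using powr_diff_le_diff_powr[of P p a] powr_diff_le_diff_powr[of Q q a] P Q a
      by (intro real_sqrt_le_mono mult_mono) (auto intro: powr_mono2)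
    finally show ?thesis .
  qed
  then have "(psi_pow a r - psi_pow a R)\<^sup>2 \<le> K\<^sup>2"
    by (metis abs_ge_zero power2_abs power_mono)
  then show ?thesis using gap by (simp add: K_def)
qed

section \<open>Entrywise powers on cycles\<close>

abbreviation psi_mat :: "real \<Rightarrow> (nat \<Rightarrow> nat \<Rightarrow> real) \<Rightarrow> nat \<Rightarrow> nat \<Rightarrow> real" where
  "psi_mat a A \<equiv> \<lambda>i j. psi_pow a (A i j)"

lemma symmetric_psi_mat: "symmetric_mat n A \<Longrightarrow> symmetric_mat n (psi_mat a A)"
  unfolding symmetric_mat_def by auto

lemma schur_compl_psi_mat:
  assumes "0 \<le> A m m"
  shows "schur_compl m (psi_mat a A) i j = psi_pow a (A i j) - psi_pow a (A i m * A m j / A m m)"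
  using assms by (simp add: schur_compl_def psi_pow_divide psi_pow_mult psi_pow_nonneg)

lemma psd_mat_psi_mat_of_schur_compl:
  assumes psd: "psd_mat (Suc m) A" and compl: "psd_mat m (schur_compl m (psi_mat a A))"
  shows "psd_mat (Suc m) (psi_mat a A)"
proof (rule psd_mat_of_schur_compl[OF symmetric_psi_mat[OF psd_mat_symmetric[OF psd]] compl])
  show "0 < psi_pow a (A m m) \<or> (\<forall>i<Suc m. psi_pow a (A i m) = 0)"
  proof (cases "A m m = 0")
    case True
    then show ?thesis using psd_mat_row_zero(2)[OF psd, of m] by simp
  next
    case False
    then have "0 < A m m" using psd_mat_diag_nonneg[OF psd, of m] by simp
    then show ?thesis by (simp add: psi_pow_nonneg)
  qed
qed

lemma psi_pow_schur_compl_diag_le: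
  assumes psd: "psd_mat (Suc m) A" and i: "i < m" and a: "1 \<le> a"
  shows "psi_pow a (schur_compl m A i i) \<le> schur_compl m (psi_mat a A) i i"
proof -
  define Y where "Y = A i m * A m i / A m m"
  have mm: "0 \<le> A m m" using psd_mat_diag_nonneg[OF psd] by simp
  have "A m i = A i m" using psd_mat_symmetric[OF psd] i unfolding symmetric_mat_def by simp
  then have Y: "0 \<le> Y" using mm by (simp add: Y_def)
  have "0 \<le> schur_compl m A i i"
    using psd_mat_diag_nonneg[OF psd_mat_schur_compl[OF psd] i] .
  then have "Y \<le> A i i" by (simp add: schur_compl_def Y_def)
  then have "psi_pow a (schur_compl m A i i) \<le> A i i powr a - Y powr a"
    using Y a by (simp add: schur_compl_def Y_def[symmetric] psi_pow_nonneg powr_diff_le_diff_powr)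
  also have "\<dots> = schur_compl m (psi_mat a A) i i"
    using mm Y \<open>Y \<le> A i i\<close> by (simp add: schur_compl_psi_mat Y_def[symmetric] psi_pow_nonneg)
  finally show ?thesis .
qed

lemma psd_mat_psi_mat_3:
  assumes psd: "psd_mat 3 A" and a: "1 \<le> a"
  shows "psd_mat 3 (psi_mat a A)"
proof -
  have A: "psd_mat (Suc 2) A" using psd by (simp add: numeral_3_eq_3)
  have sym: "A 2 0 = A 0 2" "A 2 1 = A 1 2"
    using psd_mat_symmetric[OF A] unfolding symmetric_mat_def by auto
  define P where "P = A 0 2 * A 2 0 / A 2 2"
  define Q where "Q = A 1 2 * A 2 1 / A 2 2"
  define R where "R = A 0 2 * A 2 1 / A 2 2"
  have diag: "0 \<le> A 2 2" "0 \<le> A 0 0" "0 \<le> A 1 1" using psd_mat_diag_nonneg[OF psd] by auto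
  have P: "0 \<le> P" and Q: "0 \<le> Q" unfolding P_def Q_def sym using diag(1) by simp_all
  have R: "R\<^sup>2 = P * Q" unfolding R_def P_def Q_def sym
    by (cases "A 2 2 = 0") (simp_all add: power2_eq_square field_simps)
  have S: "psd_mat 2 (schur_compl 2 A)" using psd_mat_schur_compl[OF A] .
  have S_entries: "schur_compl 2 A 0 0 = A 0 0 - P" "schur_compl 2 A 1 1 = A 1 1 - Q"
    "schur_compl 2 A 0 1 = A 0 1 - R"
    by (simp_all add: schur_compl_def P_def Q_def R_def)
  have PA: "P \<le> A 0 0" using psd_mat_diag_nonneg[OF S, of 0] S_entries by simp
  have QA: "Q \<le> A 1 1" using psd_mat_diag_nonneg[OF S, of 1] S_entries by simp
  have gap: "(A 0 1 - R)\<^sup>2 \<le> (A 0 0 - P) * (A 1 1 - Q)"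
    using psd_mat_offdiag_sq_le[OF S, of 0 1] S_entries by simp
  have T00: "schur_compl 2 (psi_mat a A) 0 0 = A 0 0 powr a - P powr a"
    unfolding schur_compl_psi_mat[where A=A and m=2, OF diag(1)] P_def[symmetric] using diag(2) P by (simp add: psi_pow_nonneg)
  have T11: "schur_compl 2 (psi_mat a A) 1 1 = A 1 1 powr a - Q powr a"
    unfolding schur_compl_psi_mat[where A=A and m=2, OF diag(1)] Q_def[symmetric] using diag(3) Q by (simp add: psi_pow_nonneg)
  have T01: "schur_compl 2 (psi_mat a A) 0 1 = psi_pow a (A 0 1) - psi_pow a R"
    unfolding schur_compl_psi_mat[where A=A and m=2, OF diag(1)] R_def[symmetric] ..
  have "psd_mat 2 (schur_compl 2 (psi_mat a A))"
  proof (rule psd_mat_2x2)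
    show "symmetric_mat 2 (schur_compl 2 (psi_mat a A))"
      by (intro symmetric_schur_compl symmetric_psi_mat psd_mat_symmetric[OF A])
    show "0 \<le> schur_compl 2 (psi_mat a A) 0 0" unfolding T00 using P PA a by (simp add: powr_mono2)
    show "0 \<le> schur_compl 2 (psi_mat a A) 1 1" unfolding T11 using Q QA a by (simp add: powr_mono2)
    show "(schur_compl 2 (psi_mat a A) 0 1)\<^sup>2
        \<le> schur_compl 2 (psi_mat a A) 0 0 * schur_compl 2 (psi_mat a A) 1 1"
      unfolding T00 T11 T01 by (rule psi_pow_rank_one_gap[OF P PA Q QA R gap a])
  qed
  then show ?thesis
    using psd_mat_psi_mat_of_schur_compl[OF A] by (simp add: numeral_3_eq_3)
qed

lemma cycle_graph_sym: "cycle_graph n i j = cycle_graph n j i"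
  unfolding cycle_graph_def by auto

lemma cycle_graph_Suc_last: "i < m \<Longrightarrow> cycle_graph (Suc m) i m \<Longrightarrow> i = m - 1 \<or> i = 0"
  unfolding cycle_graph_def by (auto simp: mod_Suc split: if_splits)

lemma cycle_graph_Suc_less:
  "i < m \<Longrightarrow> j < m \<Longrightarrow> cycle_graph (Suc m) i j \<Longrightarrow> cycle_graph m i j"
  unfolding cycle_graph_def by auto

lemma cycle_graph_Suc_not_wrap: "3 \<le> m \<Longrightarrow> \<not> cycle_graph (Suc m) 0 (m - 1)"
  unfolding cycle_graph_def by (auto simp: mod_Suc split: if_splits)

lemma cycle_graph_wrap: "2 \<le> m \<Longrightarrow> cycle_graph m 0 (m - 1)"
  unfolding cycle_graph_def by auto

text \<open>Removing the last vertex \<open>m\<close> of \<open>C\<^sub>m\<^sub>+\<^sub>1\<close> by a Schur complement creates the single fill-in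
  edge between its neighbours \<open>0\<close> and \<open>m - 1\<close>, which is exactly the missing edge of \<open>C\<^sub>m\<close>.\<close>
lemma cycle_fill_in:
  assumes m: "3 \<le> m" and A: "A \<in> PG (Suc m) (cycle_graph (Suc m)) UNIV"
    and ij: "i < m" "j < m" "i \<noteq> j" and fill: "A i m * A m j \<noteq> 0"
  shows "cycle_graph m i j" "A i j = 0"
proof -
  have zero: "A k l = 0" if "k < Suc m" "l < Suc m" "k \<noteq> l" "\<not> cycle_graph (Suc m) k l" for k l
    using A that unfolding PG_def by auto
  have "cycle_graph (Suc m) i m" "cycle_graph (Suc m) j m"
    using fill zero[of i m] zero[of m j] ij cycle_graph_sym[of "Suc m" m j] by auto
  then have "i = m - 1 \<or> i = 0" "j = m - 1 \<or> j = 0"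
    using cycle_graph_Suc_last ij by blast+
  then have ends: "(i = 0 \<and> j = m - 1) \<or> (i = m - 1 \<and> j = 0)"
    using ij by auto
  then show "cycle_graph m i j"
    using m cycle_graph_wrap[of m] cycle_graph_sym[of m 0 "m - 1"] by auto
  show "A i j = 0"
    using ends ij zero[of i j] cycle_graph_Suc_not_wrap[OF m] cycle_graph_sym[of "Suc m" 0 "m - 1"]
    by auto
qed

lemma schur_compl_cycle:
  assumes m: "3 \<le> m" and A: "A \<in> PG (Suc m) (cycle_graph (Suc m)) UNIV"
  shows "schur_compl m A \<in> PG m (cycle_graph m) UNIV"
proof -
  have psd: "psd_mat (Suc m) A" using A unfolding PG_def by simp
  have "schur_compl m A i j = 0" if "i < m" "j < m" "i \<noteq> j" "\<not> cycle_graph m i j" for i j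
  proof -
    have "\<not> cycle_graph (Suc m) i j" using that cycle_graph_Suc_less by blast
    then have "A i j = 0" using A that unfolding PG_def by auto
    moreover have "A i m * A m j = 0" using cycle_fill_in(1)[OF m A] that by blast
    ultimately show ?thesis by (simp add: schur_compl_def)
  qed
  then show ?thesis using psd_mat_schur_compl[OF psd] unfolding PG_def by auto
qed

lemma psd_mat_psi_mat_cycle_Suc:
  assumes m: "3 \<le> m" and A: "A \<in> PG (Suc m) (cycle_graph (Suc m)) UNIV" and a: "1 \<le> a"
    and IH: "psd_mat m (psi_mat a (schur_compl m A))"
  shows "psd_mat (Suc m) (psi_mat a A)"
proof -
  have psd: "psd_mat (Suc m) A" using A unfolding PG_def by simp
  have mm: "0 \<le> A m m" using psd_mat_diag_nonneg[OF psd] by simp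
  have "psd_mat m (schur_compl m (psi_mat a A))"
  proof (rule psd_mat_increase_diag[OF IH])
    show "symmetric_mat m (schur_compl m (psi_mat a A))"
      by (intro symmetric_schur_compl symmetric_psi_mat psd_mat_symmetric[OF psd])
  next
    fix i j assume ij: "i < m" "j < m" "i \<noteq> j"
    have "schur_compl m (psi_mat a A) i j = psi_pow a (A i j) - psi_pow a (A i m * A m j / A m m)"
      using mm by (rule schur_compl_psi_mat)
    also have "\<dots> = psi_pow a (schur_compl m A i j)"
      using cycle_fill_in(2)[OF m A ij] by (cases "A i m * A m j = 0") (auto simp: schur_compl_def psi_pow_minus)
    finally show "schur_compl m (psi_mat a A) i j = psi_pow a (schur_compl m A i j)" .
  next
    fix i assume "i < m"
    then show "psi_pow a (schur_compl m A i i) \<le> schur_compl m (psi_mat a A) i i"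
      by (rule psi_pow_schur_compl_diag_le[OF psd _ a])
  qed
  then show ?thesis by (rule psd_mat_psi_mat_of_schur_compl[OF psd])
qed

theorem psd_mat_psi_mat_cycle:
  assumes n: "3 \<le> n" and a: "1 \<le> a" and A: "A \<in> PG n (cycle_graph n) UNIV"
  shows "psd_mat n (psi_mat a A)"
  using n A
proof (induction n arbitrary: A rule: nat_induct_at_least)
  case base
  then show ?case using psd_mat_psi_mat_3 a unfolding PG_def by auto
next
  case (Suc m)
  then show ?case
    using psd_mat_psi_mat_cycle_Suc a schur_compl_cycle by blast
qed

section \<open>Gram matrices and the Schur product\<close>

lemma psd_mat_gram:
  fixes V :: "'k \<Rightarrow> nat \<Rightarrow> real"
  assumes "finite S"
  shows "psd_mat n (\<lambda>i j. \<Sum>k\<in>S. V k i * V k j)"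
proof -
  have "quad_form n (\<lambda>i j. \<Sum>k\<in>S. V k i * V k j) x = (\<Sum>k\<in>S. (\<Sum>i<n. x i * V k i)\<^sup>2)" for x
  proof -
    have "quad_form n (\<lambda>i j. \<Sum>k\<in>S. V k i * V k j) x
        = (\<Sum>i<n. \<Sum>j<n. \<Sum>k\<in>S. (x i * V k i) * (x j * V k j))"
      unfolding quad_form_def by (simp add: sum_distrib_left sum_distrib_right mult_ac)
    also have "\<dots> = (\<Sum>k\<in>S. \<Sum>i<n. \<Sum>j<n. (x i * V k i) * (x j * V k j))"
      by (subst sum.swap, rule sum.cong[OF refl], subst sum.swap, rule refl)
    also have "\<dots> = (\<Sum>k\<in>S. (\<Sum>i<n. x i * V k i)\<^sup>2)"
      by (simp add: power2_eq_square sum_product)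
    finally show ?thesis .
  qed
  moreover have "symmetric_mat n (\<lambda>i j. \<Sum>k\<in>S. V k i * V k j)"
    unfolding symmetric_mat_def by (simp add: mult.commute)
  ultimately show ?thesis unfolding psd_mat_iff by (simp add: sum_nonneg)
qed

text \<open>The last Gram vector is column \<open>m\<close> scaled by \<open>1 / \<surd>(A m m)\<close>; the others come from the
  Schur complement.\<close>
lemma psd_mat_imp_gram:
  "psd_mat n A \<Longrightarrow> \<exists>V. \<forall>i<n. \<forall>j<n. A i j = (\<Sum>k<n. V k i * V k j)"
proof (induction n arbitrary: A)
  case (Suc m)
  have sym: "\<And>i j. i < Suc m \<Longrightarrow> j < Suc m \<Longrightarrow> A i j = A j i"
    using psd_mat_symmetric[OF Suc.prems] unfolding symmetric_mat_def by auto
  obtain W where W: "\<forall>i<m. \<forall>j<m. schur_compl m A i j = (\<Sum>k<m. W k i * W k j)"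
    using Suc.IH[OF psd_mat_schur_compl[OF Suc.prems]] by blast
  define V where "V k i = (if k < m then (if i < m then W k i else 0) else A i m / sqrt (A m m))" for k i
  have mm: "0 \<le> A m m" using psd_mat_diag_nonneg[OF Suc.prems, of m] by simp
  have "A i j = (\<Sum>k<Suc m. V k i * V k j)" if ij: "i < Suc m" "j < Suc m" for i j
  proof -
    have "V m i * V m j = A i m * A j m / A m m"
      using mm by (simp add: V_def real_sqrt_mult[symmetric])
    then have split: "(\<Sum>k<Suc m. V k i * V k j) = (\<Sum>k<m. V k i * V k j) + A i m * A j m / A m m"
      by simp
    show ?thesis
    proof (cases "i < m \<and> j < m")
      case True
      then have "schur_compl m A i j = (\<Sum>k<m. V k i * V k j)" using W by (simp add: V_def)
      then show ?thesis using split sym[of m j] ij by (simp add: schur_compl_def)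
    next
      case False
      then have "i = m \<or> j = m" using ij by auto
      moreover have "A m m = 0 \<Longrightarrow> A k m = 0" if "k < Suc m" for k
        using psd_mat_row_zero(2)[OF Suc.prems _ that] by simp
      ultimately have "A i j = A i m * A j m / A m m"
        using ij sym[of i m] sym[of m j] by (cases "A m m = 0") auto
      then show ?thesis using split False by (auto simp: V_def)
    qed
  qed
  then show ?case by blast
qed simp

lemma psd_mat_hadamard:
  assumes "psd_mat n A" "psd_mat n B"
  shows "psd_mat n (\<lambda>i j. A i j * B i j)"
proof -
  obtain V where V: "\<forall>i<n. \<forall>j<n. A i j = (\<Sum>k<n. V k i * V k j)"
    using psd_mat_imp_gram[OF assms(1)] by blast
  obtain U where U: "\<forall>i<n. \<forall>j<n. B i j = (\<Sum>k<n. U k i * U k j)"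
    using psd_mat_imp_gram[OF assms(2)] by blast
  define W where "W = (\<lambda>kl i. V (fst kl) i * U (snd kl) i)"
  have "psd_mat n (\<lambda>i j. \<Sum>kl\<in>{..<n} \<times> {..<n}. W kl i * W kl j)"
    by (rule psd_mat_gram) simp
  moreover have "(\<Sum>kl\<in>{..<n} \<times> {..<n}. W kl i * W kl j) = A i j * B i j" if "i < n" "j < n" for i j
  proof -
    have "A i j * B i j = (\<Sum>k<n. V k i * V k j) * (\<Sum>l<n. U l i * U l j)" using V U that by simp
    also have "\<dots> = (\<Sum>k<n. \<Sum>l<n. (V k i * V k j) * (U l i * U l j))" by (simp add: sum_product)
    also have "\<dots> = (\<Sum>kl\<in>{..<n} \<times> {..<n}. W kl i * W kl j)"
      by (simp add: sum.cartesian_product W_def mult_ac split_beta)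
    finally show ?thesis by simp
  qed
  ultimately show ?thesis by (rule psd_mat_cong)
qed

lemma phi_pow_eq_psi_pow_square: "phi_pow a x = psi_pow (a / 2) (x * x)"
proof -
  have "psi_pow (a / 2) (x * x) = (\<bar>x\<bar> * \<bar>x\<bar>) powr (a / 2)"
    by (simp add: psi_pow_nonneg)
  also have "\<dots> = \<bar>x\<bar> powr (a / 2) * \<bar>x\<bar> powr (a / 2)"
    by (rule powr_mult)
  also have "\<dots> = \<bar>x\<bar> powr a"
    by (metis powr_add field_sum_of_halves)
  finally show ?thesis by (simp add: phi_pow_def)
qed

theorem phi_pow_cycle_PG:
  assumes n: "3 \<le> n" and a: "2 \<le> a" and A: "A \<in> PG n (cycle_graph n) UNIV"
  shows "(\<lambda>i j. phi_pow a (A i j)) \<in> PG n (cycle_graph n) UNIV"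
proof -
  have "(\<lambda>i j. A i j * A i j) \<in> PG n (cycle_graph n) UNIV"
    using psd_mat_hadamard[of n A A] A unfolding PG_def by auto
  from psd_mat_psi_mat_cycle[OF n _ this] a
  have "psd_mat n (\<lambda>i j. phi_pow a (A i j))" by (simp add: phi_pow_eq_psi_pow_square)
  then show ?thesis using A unfolding PG_def by (auto simp: phi_pow_def)
qed

section \<open>Counterexamples\<close>

lemma quad_form_3: "quad_form 3 A x = (\<Sum>i\<in>{0,1,2}. \<Sum>j\<in>{0,1,2}. x i * A i j * x j)"
proof -
  have "{..<3::nat} = {0,1,2}" by auto
  then show ?thesis unfolding quad_form_def by simp
qed

lemma quad_form_4: "quad_form 4 A x = (\<Sum>i\<in>{0,1,2,3}. \<Sum>j\<in>{0,1,2,3}. x i * A i j * x j)"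
proof -
  have "{..<4::nat} = {0,1,2,3}" by auto
  then show ?thesis unfolding quad_form_def by simp
qed

definition path3_mat :: "nat \<Rightarrow> nat \<Rightarrow> real" where
  "path3_mat i j = (if i \<le> 1 \<and> j \<le> 1 then 1 else 0) + (if i \<in> {1, 2} \<and> j \<in> {1, 2} then 1 else 0)"

lemma path3_mat_PG:
  assumes "3 \<le> n"
  shows "path3_mat \<in> PG n (cycle_graph n) {0..}"
proof -
  define V :: "nat \<Rightarrow> nat \<Rightarrow> real" where
    "V k i = (if k = 0 then (if i \<le> 1 then 1 else 0) else (if i \<in> {1, 2} then 1 else 0))" for k i
  have "psd_mat n (\<lambda>i j. \<Sum>k<2. V k i * V k j)" by (rule psd_mat_gram) simp
  moreover have "(\<Sum>k<2. V k i * V k j) = path3_mat i j" for i j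
    by (simp add: V_def path3_mat_def numeral_2_eq_2)
  ultimately have "psd_mat n path3_mat" by simp
  moreover have "path3_mat i j = 0" if "i \<noteq> j" "\<not> cycle_graph n i j" for i j
    using that assms unfolding path3_mat_def cycle_graph_def by auto
  ultimately show ?thesis unfolding PG_def by (auto simp: path3_mat_def)
qed

lemma not_psd_path3_mat_powr:
  assumes n: "3 \<le> n" and a: "a < 1"
  shows "\<not> psd_mat n (\<lambda>i j. path3_mat i j powr a)"
proof
  assume "psd_mat n (\<lambda>i j. path3_mat i j powr a)"
  define x :: "nat \<Rightarrow> real" where "x k = (if k = 1 then -1 else if k \<le> 2 then 1 else 0)" for k
  have "0 \<le> quad_form n (\<lambda>i j. path3_mat i j powr a) x"
    by (rule psd_mat_quad_form_nonneg) fact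
  also have "\<dots> = quad_form 3 (\<lambda>i j. path3_mat i j powr a) x"
    by (rule quad_form_restrict) (use n in \<open>auto simp: x_def\<close>)
  also have "\<dots> = 2 powr a - 2"
    by (simp add: quad_form_3 x_def path3_mat_def)
  finally have "2 \<le> 2 powr a" by simp
  moreover have "2 powr a < 2 powr 1" using a by (intro powr_less_mono) auto
  ultimately show False by simp
qed

lemma lt_one_notin_HG:
  assumes n: "3 \<le> n" and a: "a < 1"
  shows "a \<notin> HG n (cycle_graph n)" "a \<notin> HG_psi n (cycle_graph n)" "a \<notin> HG_phi n (cycle_graph n)"
proof -
  have P: "path3_mat \<in> PG n (cycle_graph n) {0..}" by (rule path3_mat_PG[OF n])
  then have "path3_mat \<in> PG n (cycle_graph n) UNIV" unfolding PG_def by auto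
  moreover have "psi_pow a (path3_mat i j) = path3_mat i j powr a"
      "phi_pow a (path3_mat i j) = path3_mat i j powr a" for i j
    by (simp_all add: path3_mat_def psi_pow_nonneg phi_pow_def)
  ultimately show "a \<notin> HG n (cycle_graph n)" "a \<notin> HG_psi n (cycle_graph n)"
    "a \<notin> HG_phi n (cycle_graph n)"
    using P not_psd_path3_mat_powr[OF n a]
    unfolding HG_def HG_psi_def HG_phi_def PG_def hpow_def by auto
qed

text \<open>A matrix on \<open>C\<^sub>n\<close> (\<open>n \<ge> 4\<close>), entered via its upper triangle, whose wrap-around edge
  \<open>{0, n - 1}\<close> has sign \<open>s\<close>. Vertex \<open>n - 1\<close> has diagonal \<open>1\<close> and neighbours \<open>0\<close> and \<open>n - 2\<close>;
  eliminating it lowers their diagonals by \<open>2\<close> and \<open>1\<close> and creates the edge \<open>{0, n - 2}\<close> with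
  sign \<open>-s\<close>, i.e. the same matrix on \<open>C\<^sub>n\<^sub>-\<^sub>1\<close> with \<open>s\<close> flipped.\<close>
definition twisted_cycle_diag :: "nat \<Rightarrow> nat \<Rightarrow> real" where
  "twisted_cycle_diag n i = (if i = 0 then 2 * real n - 6 else if i \<le> 2 then 2
     else if i = 3 then (if n = 4 then 2 else 3) else if i = n - 1 then 1 else 2)"

definition twisted_cycle_upper :: "nat \<Rightarrow> real \<Rightarrow> nat \<Rightarrow> nat \<Rightarrow> real" where
  "twisted_cycle_upper n s i j = (if i = j then twisted_cycle_diag n i
    else if (i = 0 \<and> j = 1) \<or> (i = 1 \<and> j = 2) \<or> (i = 2 \<and> j = 3) then sqrt 2
    else if i = 0 \<and> j = n - 1 then s * sqrt 2
    else if 3 \<le> i \<and> j = Suc i then 1 else 0)"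

definition twisted_cycle_mat :: "nat \<Rightarrow> real \<Rightarrow> nat \<Rightarrow> nat \<Rightarrow> real" where
  "twisted_cycle_mat n s i j = twisted_cycle_upper n s (min i j) (max i j)"

lemma twisted_cycle_mat_sym: "twisted_cycle_mat n s i j = twisted_cycle_mat n s j i"
  unfolding twisted_cycle_mat_def by (simp add: min.commute max.commute)

lemma symmetric_twisted_cycle_mat: "symmetric_mat n (twisted_cycle_mat n s)"
  unfolding symmetric_mat_def using twisted_cycle_mat_sym by auto

lemma twisted_cycle_upper_edge:
  assumes "4 \<le> n" "lo < hi" "hi < n" "twisted_cycle_upper n s lo hi \<noteq> 0"
  shows "cycle_graph n lo hi"
proof -
  have "(lo = 0 \<and> hi = n - 1) \<or> hi = Suc lo"
    using assms unfolding twisted_cycle_upper_def by (auto split: if_splits)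
  then show ?thesis using assms unfolding cycle_graph_def by auto
qed

lemma twisted_cycle_mat_PG:
  assumes n: "4 \<le> n" and psd: "psd_mat n (twisted_cycle_mat n s)"
  shows "twisted_cycle_mat n s \<in> PG n (cycle_graph n) UNIV"
proof -
  have "twisted_cycle_mat n s i j = 0"
    if ij: "i < n" "j < n" "i \<noteq> j" and edge: "\<not> cycle_graph n i j" for i j
  proof (rule ccontr)
    assume "twisted_cycle_mat n s i j \<noteq> 0"
    then have "cycle_graph n (min i j) (max i j)"
      using twisted_cycle_upper_edge[OF n, of "min i j" "max i j" s] ij
      unfolding twisted_cycle_mat_def by (simp add: min_def max_def)
    then show False using edge cycle_graph_sym[of n i j] by (simp add: min_def max_def split: if_splits)
  qed
  then show ?thesis using psd unfolding PG_def by auto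
qed

lemma twisted_cycle_mat_last_col:
  assumes "4 \<le> m" "k < m"
  shows "twisted_cycle_mat (Suc m) s k m = (if k = 0 then s * sqrt 2 else if k = m - 1 then 1 else 0)"
  using assms by (auto simp: twisted_cycle_mat_def twisted_cycle_upper_def)

lemma twisted_cycle_diag_Suc:
  assumes "4 \<le> m" "i < m"
  shows "twisted_cycle_diag (Suc m) i = twisted_cycle_diag m i + (if i = 0 then 2 else if i = m - 1 then 1 else 0)"
  using assms unfolding twisted_cycle_diag_def by auto

lemma twisted_cycle_upper_Suc:
  assumes "4 \<le> m" "lo < hi" "hi < m"
  shows "twisted_cycle_upper (Suc m) s lo hi
    = twisted_cycle_upper m (- s) lo hi + (if lo = 0 \<and> hi = m - 1 then s * sqrt 2 else 0)"
  using assms unfolding twisted_cycle_upper_def by auto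

lemma schur_compl_twisted_cycle_mat:
  assumes m: "4 \<le> m" and s: "s * s = 1" and ij: "i < m" "j < m"
  shows "schur_compl m (twisted_cycle_mat (Suc m) s) i j = twisted_cycle_mat m (- s) i j"
proof -
  let ?c = "\<lambda>k. twisted_cycle_mat (Suc m) s k m"
  have "twisted_cycle_mat (Suc m) s m m = 1"
    using m by (simp add: twisted_cycle_mat_def twisted_cycle_upper_def twisted_cycle_diag_def)
  then have "schur_compl m (twisted_cycle_mat (Suc m) s) i j = twisted_cycle_mat (Suc m) s i j - ?c i * ?c j"
    using twisted_cycle_mat_sym[of "Suc m" s m j] by (simp add: schur_compl_def)
  also have "\<dots> = twisted_cycle_mat m (- s) i j"
  proof (cases "i = j")
    case True
    have "s * sqrt 2 * (s * sqrt 2) = 2" using s by (simp add: algebra_simps)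
    then show ?thesis
      using True ij m twisted_cycle_diag_Suc[OF m ij(1)]
      by (auto simp: twisted_cycle_mat_def twisted_cycle_upper_def twisted_cycle_mat_last_col)
  next
    case False
    have "?c i * ?c j = (if min i j = 0 \<and> max i j = m - 1 then s * sqrt 2 else 0)"
      using False ij m by (auto simp: twisted_cycle_mat_last_col min_def max_def)
    then show ?thesis
      using False ij twisted_cycle_upper_Suc[OF m, of "min i j" "max i j" s]
      by (simp add: twisted_cycle_mat_def min_def max_def)
  qed
  finally show ?thesis .
qed

lemma psd_mat_twisted_cycle_iff:
  assumes n: "4 \<le> n" and s: "s * s = 1"
  shows "psd_mat n (twisted_cycle_mat n s) \<longleftrightarrow> psd_mat 4 (twisted_cycle_mat 4 (s * (-1) ^ (n - 4)))"
  using n s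
proof (induction n arbitrary: s rule: nat_induct_at_least)
  case (Suc m)
  have "psd_mat (Suc m) (twisted_cycle_mat (Suc m) s) \<longleftrightarrow>
      psd_mat m (schur_compl m (twisted_cycle_mat (Suc m) s))"
    using Suc.hyps by (intro psd_mat_Suc_iff_schur_compl symmetric_twisted_cycle_mat)
      (simp add: twisted_cycle_mat_def twisted_cycle_upper_def twisted_cycle_diag_def)
  also have "\<dots> \<longleftrightarrow> psd_mat m (twisted_cycle_mat m (- s))"
    using schur_compl_twisted_cycle_mat[OF Suc.hyps Suc.prems] psd_mat_cong by metis
  also have "\<dots> \<longleftrightarrow> psd_mat 4 (twisted_cycle_mat 4 (- s * (-1) ^ (m - 4)))"
    using Suc.IH Suc.prems by simp
  also have "- s * (-1) ^ (m - 4) = s * (-1) ^ (Suc m - 4)"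
  proof -
    obtain k where "m = 4 + k" using Suc.hyps by (metis le_add_diff_inverse)
    then show ?thesis by simp
  qed
  finally show ?case .
qed simp

lemma psd_mat_twisted_cycle_4: "psd_mat 4 (twisted_cycle_mat 4 (-1))"
proof -
  define U :: "nat \<Rightarrow> nat \<Rightarrow> real" where
    "U k i = (if k = 0 then (if i = 0 then sqrt 2 else if i = 1 then 1 else if i = 3 then -1 else 0)
              else (if i = 1 then 1 else if i = 2 then sqrt 2 else if i = 3 then 1 else 0))" for k i
  have "psd_mat 4 (\<lambda>i j. \<Sum>k<2. U k i * U k j)" by (rule psd_mat_gram) simp
  moreover have "(\<Sum>k<2. U k i * U k j) = twisted_cycle_mat 4 (-1) i j" if "i < 4" "j < 4" for i j
  proof -
    have "i = 0 \<or> i = 1 \<or> i = 2 \<or> i = 3" "j = 0 \<or> j = 1 \<or> j = 2 \<or> j = 3" using that by auto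
    then show ?thesis
      by (elim disjE) (simp_all add: U_def twisted_cycle_mat_def twisted_cycle_upper_def
          twisted_cycle_diag_def numeral_2_eq_2)
  qed
  ultimately show ?thesis by (rule psd_mat_cong)
qed

lemma quad_form_twisted_cycle_4_alternating:
  "quad_form 4 (\<lambda>i j. f (twisted_cycle_mat 4 s i j)) (\<lambda>k. if even k then 1 else -1)
    = 4 * f 2 - 6 * f (sqrt 2) - 2 * f (s * sqrt 2) + 4 * f 0"
  by (simp add: quad_form_4 twisted_cycle_mat_def twisted_cycle_upper_def twisted_cycle_diag_def)

lemma not_psd_mat_twisted_cycle_4: "\<not> psd_mat 4 (twisted_cycle_mat 4 1)"
proof
  assume "psd_mat 4 (twisted_cycle_mat 4 1)"
  from psd_mat_quad_form_nonneg[OF this, of "\<lambda>k. if even k then 1 else -1"]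
  have "0 \<le> 8 - 8 * sqrt 2"
    using quad_form_twisted_cycle_4_alternating[of "\<lambda>x. x" 1] by simp
  then show False by simp
qed

lemma not_psd_mat_phi_pow_twisted_cycle_4:
  assumes a: "a < 2"
  shows "\<not> psd_mat 4 (\<lambda>i j. phi_pow a (twisted_cycle_mat 4 (-1) i j))"
proof
  assume "psd_mat 4 (\<lambda>i j. phi_pow a (twisted_cycle_mat 4 (-1) i j))"
  from psd_mat_quad_form_nonneg[OF this, of "\<lambda>k. if even k then 1 else -1"]
  have "0 \<le> 4 * 2 powr a - 8 * sqrt 2 powr a"
    using quad_form_twisted_cycle_4_alternating[of "phi_pow a" "-1"] by (simp add: phi_pow_def)
  also have "4 * 2 powr a - 8 * sqrt 2 powr a = 4 * sqrt 2 powr a * (sqrt 2 powr a - 2)"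
    by (simp add: algebra_simps powr_mult[symmetric])
  finally have "2 \<le> sqrt 2 powr a" by (simp add: zero_le_mult_iff)
  moreover have "sqrt 2 powr a < sqrt 2 powr 2" using a by (intro powr_less_mono) auto
  ultimately show False by simp
qed

lemma psi_pow_cycle_PG:
  assumes "3 \<le> n" "1 \<le> a" "A \<in> PG n (cycle_graph n) UNIV"
  shows "psi_mat a A \<in> PG n (cycle_graph n) UNIV"
  using psd_mat_psi_mat_cycle[OF assms] assms(3) unfolding PG_def by auto

lemma hpow_cycle_PG:
  assumes "3 \<le> n" "1 \<le> a" "A \<in> PG n (cycle_graph n) {0..}"
  shows "hpow a A \<in> PG n (cycle_graph n) UNIV"
proof -
  have "A \<in> PG n (cycle_graph n) UNIV" using assms(3) unfolding PG_def by auto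
  moreover have "psi_pow a (A i j) = hpow a A i j" if "i < n" "j < n" for i j
    using assms(3) that unfolding PG_def hpow_def by (simp add: psi_pow_nonneg)
  ultimately have "psd_mat n (hpow a A)"
    using psd_mat_cong[OF psd_mat_psi_mat_cycle[OF assms(1,2)]] by blast
  then show ?thesis using assms(3) unfolding PG_def hpow_def by auto
qed

lemma twisted_cycle_mat_PG_even:
  assumes "4 \<le> n" "even n"
  shows "twisted_cycle_mat n (-1) \<in> PG n (cycle_graph n) UNIV" "\<not> psd_mat n (twisted_cycle_mat n 1)"
proof -
  have "(-1::real) ^ (n - 4) = 1" using assms by simp
  then show "twisted_cycle_mat n (-1) \<in> PG n (cycle_graph n) UNIV" "\<not> psd_mat n (twisted_cycle_mat n 1)"
    using psd_mat_twisted_cycle_iff[OF assms(1)] psd_mat_twisted_cycle_4 not_psd_mat_twisted_cycle_4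
      twisted_cycle_mat_PG[OF assms(1)] by auto
qed

lemma phi_pow_one_twisted_cycle_mat:
  assumes "4 \<le> n"
  shows "(\<lambda>i j. phi_pow 1 (twisted_cycle_mat n (-1) i j)) = twisted_cycle_mat n 1"
proof (intro ext)
  fix i j
  have abs_upper: "\<bar>twisted_cycle_upper n (-1) lo hi\<bar> = twisted_cycle_upper n 1 lo hi" for lo hi
    using assms unfolding twisted_cycle_upper_def twisted_cycle_diag_def by auto
  have "phi_pow 1 (twisted_cycle_mat n (-1) i j) = \<bar>twisted_cycle_upper n (-1) (min i j) (max i j)\<bar>"
    by (simp add: phi_pow_def twisted_cycle_mat_def)
  then show "phi_pow 1 (twisted_cycle_mat n (-1) i j) = twisted_cycle_mat n 1 i j"
    unfolding abs_upper by (simp add: twisted_cycle_mat_def)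
qed

theorem proposition4p3:
  shows "(\<forall>n::nat. n \<ge> 3 \<longrightarrow>
            HG n (cycle_graph n) = {1..} \<and> HG_psi n (cycle_graph n) = {1..})
       \<and> HG_phi 4 (cycle_graph 4) = {2..}
       \<and> (\<forall>n::nat. n > 4 \<longrightarrow>
            {2..} \<subseteq> HG_phi n (cycle_graph n) \<and> HG_phi n (cycle_graph n) \<subseteq> {1..}
            \<and> (even n \<longrightarrow> (1::real) \<notin> HG_phi n (cycle_graph n)))"
proof (intro conjI allI impI)
  fix n :: nat assume n: "3 \<le> n"
  show "HG n (cycle_graph n) = {1..}"
    using lt_one_notin_HG(1)[OF n] hpow_cycle_PG[OF n] unfolding HG_def by force
  show "HG_psi n (cycle_graph n) = {1..}"
    using lt_one_notin_HG(2)[OF n] psi_pow_cycle_PG[OF n] unfolding HG_psi_def by force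
next
  have "a \<in> HG_phi 4 (cycle_graph 4) \<longleftrightarrow> 2 \<le> a" for a
    using phi_pow_cycle_PG[of 4 a] not_psd_mat_phi_pow_twisted_cycle_4[of a]
      twisted_cycle_mat_PG_even(1)[of 4]
    unfolding HG_phi_def PG_def by force
  then show "HG_phi 4 (cycle_graph 4) = {2..}" by auto
next
  fix n :: nat assume n: "4 < n"
  then show "{2..} \<subseteq> HG_phi n (cycle_graph n)"
    using phi_pow_cycle_PG[of n] unfolding HG_phi_def by auto
  show "HG_phi n (cycle_graph n) \<subseteq> {1..}"
    using lt_one_notin_HG(3)[of n] n by force
  assume "even n"
  then show "(1::real) \<notin> HG_phi n (cycle_graph n)"
    using twisted_cycle_mat_PG_even[of n] phi_pow_one_twisted_cycle_mat[of n] n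
    unfolding HG_phi_def PG_def by auto
qed

end
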